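(* Let $Y_1,\ldots,Y_n$ be i.i.d. Bernoulli with parameter $p=\mathbb{P}[Y_\ell=1]\in[0,\tfrac12]$, and let $\hat p(n)=\frac1n\sum_{\ell=1}^n\mathbb{1}\{Y_\ell=1\}$. Let $\delta\in(0,\tfrac12]$. If $n\geq 200\log(\frac4\delta)$, then with probability larger than $1-\delta$, \[ |h_b(\hat p(n))-h_b(p)|\leq \mathrm{UCD}_{\mathrm{ber}}(\hat p(n),\delta,n), \] where \[ \mathrm{UCD}_{\mathrm{ber}}(q,\delta,n):=\sqrt{\frac{12q\log(\frac6\delta)}{n}}\log\Bigl(\frac{n}{q\log(\frac6\delta)}\Bigr)+\frac{18\log(\frac6\delta)\log(n)}{n}, \] with the first term interpreted as $0$ when $q=0$.
   Context: $h_b(p):=-p\log p-(1-p)\log(1-p)$ is the binary entropy function (natural logarithm, $0\log 0=0$). *)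

theory Defs
  imports "HOL-Probability.Probability"
begin

text \<open>Binary entropy with natural logarithm (0 log 0 = 0 holds since 0 * _ = 0).\<close>
definition hb :: "real \<Rightarrow> real" where
  "hb p = - p * ln p - (1 - p) * ln (1 - p)"

definition UCD_ber :: "real \<Rightarrow> real \<Rightarrow> nat \<Rightarrow> real" where
  "UCD_ber q \<delta> n =
     (if q = 0 then 0
      else sqrt (12 * q * ln (6 / \<delta>) / real n) * ln (real n / (q * ln (6 / \<delta>))))
     + 18 * ln (6 / \<delta>) * ln (real n) / real n"

definition phat :: "nat \<Rightarrow> (nat \<Rightarrow> bool) \<Rightarrow> real" where
  "phat n Y = (1 / real n) * (\<Sum>l\<in>{1..n}. if Y l then 1 else 0)"

end

theory Submission
  imports Defs
begin

text \<open>
  A Chernoff bound, with \<open>exp s \<le> 1 + s + s\<^sup>2\<close> for \<open>s \<le> 1\<close>, shows that the number of ones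
  deviates from \<open>n p\<close> by at least \<open>2 sqrt (n p L) + 2 L\<close> with probability at most
  \<open>2 exp (- L)\<close>, which is \<open>\<delta>/3\<close> for \<open>L = ln (6/\<delta>)\<close>. Off that event, \<open>q = phat n Y\<close> and
  \<open>e = L/n\<close> satisfy \<open>|q - p| \<le> 2 sqrt (p e) + 2 e\<close>, and solving this quadratic inequality in
  \<open>sqrt p\<close> gives \<open>|q - p| \<le> 2 sqrt (q e) + 8 e\<close>. The entropy has the modulus of continuity
  \<open>t - t ln t\<close>, which is increasing and subadditive on \<open>[0,1]\<close>; applied to the two parts of
  this radius it gives the two terms of \<open>UCD_ber\<close>, the sample size making \<open>e\<close> small enough
  for the constants.
\<close>

lemma minus_mult_ln_add_le:
  fixes x t :: real
  assumes "0 \<le> x" "0 \<le> t"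
  shows "- (x + t) * ln (x + t) \<le> - x * ln x - t * ln t"
proof (cases "x = 0 \<or> t = 0")
  case False
  then have "0 < x" "0 < t" using assms by auto
  then have "x * ln x \<le> x * ln (x + t)" "t * ln t \<le> t * ln (x + t)"
    by (auto intro: mult_left_mono)
  then show ?thesis by (simp add: algebra_simps)
qed auto

lemma mult_ln_add_minus_mult_ln_le:
  fixes x t :: real
  assumes "0 \<le> x" "0 \<le> t" "x + t \<le> 1"
  shows "(x + t) * ln (x + t) - x * ln x \<le> t"
proof (cases "x = 0")
  case True
  then show ?thesis
    using assms ln_le_minus_one[of t] by (cases "t = 0") (auto simp: mult_nonneg_nonpos)
next
  case False
  then have x: "0 < x" using assms by auto
  have "t * ln (x + t) \<le> 0" using x assms by (simp add: mult_nonneg_nonpos)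
  moreover have "x * (ln (x + t) - ln x) \<le> t"
  proof -
    have "x * ln ((x + t) / x) \<le> x * ((x + t) / x - 1)"
      using x assms by (intro mult_left_mono ln_le_minus_one) auto
    then show ?thesis using x assms by (simp add: ln_div field_simps)
  qed
  ultimately show ?thesis by (simp add: algebra_simps)
qed

lemma self_minus_mult_ln_mono:
  fixes s t :: real
  assumes "0 \<le> s" "s \<le> t" "t \<le> 1"
  shows "s - s * ln s \<le> t - t * ln t"
  using mult_ln_add_minus_mult_ln_le[of s "t - s"] assms by simp

lemma abs_hb_diff_le:
  fixes a b :: real
  assumes "0 \<le> a" "a \<le> 1" "0 \<le> b" "b \<le> 1"
  shows "\<bar>hb b - hb a\<bar> \<le> \<bar>b - a\<bar> - \<bar>b - a\<bar> * ln \<bar>b - a\<bar>"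
proof -
  have ordered: "\<bar>hb b - hb a\<bar> \<le> (b - a) - (b - a) * ln (b - a)"
    if "0 \<le> a" "a \<le> b" "b \<le> 1" for a b :: real
  proof -
    define t where "t = b - a"
    have b: "b = a + t" "0 \<le> t" using that by (auto simp: t_def)
    \<comment> \<open>both summands of \<open>hb\<close> are handled by the same two estimates, at \<open>a\<close> and at \<open>1 - b\<close>\<close>
    have "- b * ln b \<le> - a * ln a - t * ln t"
      "- (1 - a) * ln (1 - a) \<le> - (1 - b) * ln (1 - b) - t * ln t"
      using minus_mult_ln_add_le[of a t] minus_mult_ln_add_le[of "1 - b" t] that b by simp_all
    moreover have "b * ln b - a * ln a \<le> t"
      "(1 - a) * ln (1 - a) - (1 - b) * ln (1 - b) \<le> t"
      using mult_ln_add_minus_mult_ln_le[of a t] mult_ln_add_minus_mult_ln_le[of "1 - b" t] that b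
      by simp_all
    ultimately show ?thesis
      unfolding hb_def t_def[symmetric] by (simp add: abs_le_iff algebra_simps)
  qed
  show ?thesis
  proof (cases "a \<le> b")
    case True
    then show ?thesis using ordered[of a b] assms by simp
  next
    case False
    then show ?thesis using ordered[of b a] assms by (simp add: abs_minus_commute)
  qed
qed

lemma abs_hb_diff_le_split:
  fixes p q A B :: real
  assumes "0 \<le> p" "p \<le> 1" "0 \<le> q" "q \<le> 1" "0 \<le> A" "0 \<le> B" "A + B \<le> 1"
    and "\<bar>q - p\<bar> \<le> A + B"
  shows "\<bar>hb q - hb p\<bar> \<le> (A - A * ln A) + (B - B * ln B)"
proof -
  have "\<bar>hb q - hb p\<bar> \<le> \<bar>q - p\<bar> - \<bar>q - p\<bar> * ln \<bar>q - p\<bar>"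
    using assms by (intro abs_hb_diff_le)
  also have "\<dots> \<le> (A + B) - (A + B) * ln (A + B)"
    using assms by (intro self_minus_mult_ln_mono) auto
  also have "\<dots> \<le> (A - A * ln A) + (B - B * ln B)"
    using minus_mult_ln_add_le[of A B] assms by (simp add: algebra_simps)
  finally show ?thesis .
qed

lemma two_sqrt_minus_mult_ln_le:
  fixes w :: real
  assumes "0 < w" "w \<le> 3/400"
  shows "2 * sqrt w - 2 * sqrt w * ln (2 * sqrt w) \<le> sqrt (12 * w) * - ln w"
proof -
  have lw: "397/400 \<le> - ln w" using ln_le_minus_one[of w] assms by simp
  have "ln (2 * sqrt w) = ln 2 + ln w / 2"
    using assms by (simp add: ln_mult ln_sqrt)
  then have "2 * sqrt w - 2 * sqrt w * ln (2 * sqrt w) = sqrt w * (2 - 2 * ln 2 - ln w)"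
    by (simp add: algebra_simps)
  also have "\<dots> \<le> sqrt w * (2 - ln w)"
    using assms by (intro mult_left_mono) auto
  also have "\<dots> \<le> sqrt w * (17/5 * - ln w)"
    using lw assms by (intro mult_left_mono) auto
  also have "\<dots> \<le> sqrt w * (sqrt 12 * - ln w)"
  proof -
    have "(17/5 :: real) = sqrt (289/25)" by (simp add: real_sqrt_divide)
    also have "\<dots> \<le> sqrt 12" by simp
    finally show ?thesis using lw assms by (intro mult_left_mono mult_right_mono) auto
  qed
  also have "\<dots> = sqrt (12 * w) * - ln w" by (simp add: real_sqrt_mult)
  finally show ?thesis .
qed

lemma eight_minus_mult_ln_le:
  fixes e :: real
  assumes "0 < e"
  shows "8 * e - 8 * e * ln (8 * e) \<le> 8 * e * - ln e"
proof -
  have "exp 1 \<le> (8 :: real)" using exp_bound[of 1] by simp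
  then have "1 \<le> ln (8 :: real)" using ln_ge_iff[of 8 1] by simp
  then have "8 * e * (1 - ln 8) \<le> 0" using assms by (simp add: mult_nonneg_nonpos)
  then show ?thesis using assms by (simp add: ln_mult algebra_simps)
qed

definition count_true :: "'a set \<Rightarrow> ('a \<Rightarrow> bool) \<Rightarrow> real" where
  "count_true I Y = (\<Sum>l\<in>I. if Y l then 1 else 0)"

lemma count_true_bounds: "0 \<le> count_true I Y" "count_true I Y \<le> real (card I)"
proof -
  show "0 \<le> count_true I Y"
    unfolding count_true_def by (intro sum_nonneg) auto
  have "count_true I Y \<le> of_nat (card I) * 1"
    unfolding count_true_def by (intro sum_bounded_above) auto
  then show "count_true I Y \<le> real (card I)" by simp
qed

lemma phat_eq_count_true: "phat n Y = count_true {1..n} Y / real n"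
  by (simp add: phat_def count_true_def)

lemma exp_le_one_add_self_add_square:
  fixes x :: real
  assumes "x \<le> 1"
  shows "exp x \<le> 1 + x + x\<^sup>2"
proof (cases "0 \<le> x")
  case True
  then show ?thesis using assms by (rule exp_bound)
next
  case False
  define y where "y = - x"
  have "0 \<le> 1 - y + y\<^sup>2"
    using sum_power2_ge_zero[of "y - 1/2" 0] by (simp add: power2_eq_square algebra_simps)
  then have "(1 - y + y\<^sup>2) * (1 + y) \<le> (1 - y + y\<^sup>2) * exp y"
    by (intro mult_left_mono exp_ge_add_one_self)
  moreover have "(1 - y + y\<^sup>2) * (1 + y) = 1 + y ^ 3"
    by (simp add: power2_eq_square power3_eq_cube algebra_simps)
  moreover have "0 \<le> y ^ 3" using False by (simp add: y_def)
  ultimately have "1 \<le> (1 - y + y\<^sup>2) * exp y" by linarith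
  then show ?thesis by (simp add: y_def exp_minus field_simps)
qed

lemma prob_count_true_ge_le:
  fixes p s c :: real
  assumes "finite I" "0 \<le> p" "p \<le> 1"
  shows "measure_pmf.prob (Pi_pmf I False (\<lambda>_. bernoulli_pmf p)) {Y. c \<le> s * count_true I Y}
           \<le> exp (real (card I) * p * (exp s - 1) - c)"
proof -
  define M where "M = Pi_pmf I False (\<lambda>_. bernoulli_pmf p)"
  have fin: "finite (set_pmf M)"
    unfolding M_def using assms(1) by (subst set_Pi_pmf) (auto intro!: finite_PiE_dflt)
  have "measure_pmf.prob M {Y. c \<le> s * count_true I Y}
          = measure_pmf.expectation M (indicator {Y. c \<le> s * count_true I Y})"
    by simp
  also have "\<dots> \<le> measure_pmf.expectation M (\<lambda>Y. exp (s * count_true I Y - c))"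
    using fin by (intro integral_mono integrable_measure_pmf_finite) (auto simp: indicator_def)
  also have "\<dots> = exp (- c) * (\<Prod>l\<in>I. measure_pmf.expectation (bernoulli_pmf p)
                                        (\<lambda>b. exp (s * (if b then 1 else 0))))"
  proof -
    have "(\<lambda>Y. exp (s * count_true I Y - c))
            = (\<lambda>Y. exp (- c) * (\<Prod>l\<in>I. exp (s * (if Y l then 1 else 0))))"
      using assms(1) by (simp add: count_true_def sum_distrib_left exp_diff exp_sum exp_minus field_simps)
    moreover have "measure_pmf.expectation M (\<lambda>Y. \<Prod>l\<in>I. exp (s * (if Y l then 1 else 0)))
        = (\<Prod>l\<in>I. measure_pmf.expectation (bernoulli_pmf p) (\<lambda>b. exp (s * (if b then 1 else 0))))"
      unfolding M_def using assms(1)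
      by (rule expectation_prod_Pi_pmf[where f = "\<lambda>_ b. exp (s * (if b then 1 else 0))"])
        (auto intro: integrable_measure_pmf_finite)
    ultimately show ?thesis by simp
  qed
  also have "\<dots> = exp (- c) * (1 + p * (exp s - 1)) ^ card I"
    using assms by (simp add: algebra_simps)
  also have "\<dots> \<le> exp (- c) * exp (p * (exp s - 1)) ^ card I"
  proof (intro mult_left_mono power_mono)
    have "0 \<le> 1 - p + p * exp s" using assms by (simp add: add_nonneg_nonneg)
    then show "0 \<le> 1 + p * (exp s - 1)" by (simp add: algebra_simps)
  qed (simp_all add: exp_ge_add_one_self)
  also have "\<dots> = exp (real (card I) * p * (exp s - 1) - c)"
    by (simp add: exp_of_nat_mult[symmetric] mult_exp_exp mult.assoc)
  finally show ?thesis unfolding M_def .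
qed

lemma prob_count_true_deviation_le:
  fixes p s u :: real
  assumes "finite I" "0 \<le> p" "p \<le> 1" "0 \<le> s" "s \<le> 1"
  shows "measure_pmf.prob (Pi_pmf I False (\<lambda>_. bernoulli_pmf p))
           {Y. u \<le> \<bar>count_true I Y - real (card I) * p\<bar>}
           \<le> 2 * exp (real (card I) * p * s\<^sup>2 - s * u)"
proof -
  define M where "M = Pi_pmf I False (\<lambda>_. bernoulli_pmf p)"
  define N where "N = real (card I) * p"
  have N: "0 \<le> N" using assms by (simp add: N_def)
  have mgf: "N * (exp t - 1) \<le> N * (t + t\<^sup>2)" if "t \<le> 1" for t
    using N exp_le_one_add_self_add_square[OF that] by (intro mult_left_mono) auto
  have upper: "measure_pmf.prob M {Y. s * (N + u) \<le> s * count_true I Y}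
                 \<le> exp (N * s\<^sup>2 - s * u)"
  proof -
    have "measure_pmf.prob M {Y. s * (N + u) \<le> s * count_true I Y}
            \<le> exp (N * (exp s - 1) - s * (N + u))"
      unfolding M_def N_def using assms by (intro prob_count_true_ge_le)
    also have "\<dots> \<le> exp (N * s\<^sup>2 - s * u)"
      using mgf[of s] assms by (simp add: algebra_simps)
    finally show ?thesis .
  qed
  have lower: "measure_pmf.prob M {Y. (- s) * (N - u) \<le> (- s) * count_true I Y}
                 \<le> exp (N * s\<^sup>2 - s * u)"
  proof -
    have "measure_pmf.prob M {Y. (- s) * (N - u) \<le> (- s) * count_true I Y}
            \<le> exp (N * (exp (- s) - 1) - (- s) * (N - u))"
      unfolding M_def N_def using assms by (intro prob_count_true_ge_le)
    also have "\<dots> \<le> exp (N * s\<^sup>2 - s * u)"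
      using mgf[of "- s"] assms by (simp add: algebra_simps)
    finally show ?thesis .
  qed
  have "{Y. u \<le> \<bar>count_true I Y - N\<bar>}
          \<subseteq> {Y. s * (N + u) \<le> s * count_true I Y} \<union> {Y. (- s) * (N - u) \<le> (- s) * count_true I Y}"
  proof
    fix Y assume "Y \<in> {Y. u \<le> \<bar>count_true I Y - N\<bar>}"
    then consider "N + u \<le> count_true I Y" | "count_true I Y \<le> N - u" by fastforce
    then show "Y \<in> {Y. s * (N + u) \<le> s * count_true I Y} \<union> {Y. (- s) * (N - u) \<le> (- s) * count_true I Y}"
      using assms(4) by cases (auto intro: mult_left_mono mult_left_mono_neg)
  qed
  then have "measure_pmf.prob M {Y. u \<le> \<bar>count_true I Y - N\<bar>}
               \<le> measure_pmf.prob M {Y. s * (N + u) \<le> s * count_true I Y}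
                 + measure_pmf.prob M {Y. (- s) * (N - u) \<le> (- s) * count_true I Y}"
    by (intro order_trans[OF measure_pmf.finite_measure_mono measure_Un_le]) auto
  then show ?thesis using upper lower by (simp add: M_def N_def)
qed

lemma prob_count_true_deviation_le_exp:
  fixes p L :: real
  assumes "finite I" "0 \<le> p" "p \<le> 1" "0 \<le> L"
  shows "measure_pmf.prob (Pi_pmf I False (\<lambda>_. bernoulli_pmf p))
           {Y. 2 * sqrt (real (card I) * p * L) + 2 * L \<le> \<bar>count_true I Y - real (card I) * p\<bar>}
           \<le> 2 * exp (- L)"
proof -
  define N where "N = real (card I) * p"
  define u where "u = 2 * sqrt (N * L) + 2 * L"
  have N: "0 \<le> N" using assms by (simp add: N_def)
  \<comment> \<open>the exponent is minimised near \<open>s = sqrt (L / N)\<close>, which is capped at 1\<close>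
  obtain s where s: "0 \<le> s" "s \<le> 1" "N * s\<^sup>2 - s * u \<le> - L"
  proof (cases "N \<le> L")
    case True
    have "0 \<le> sqrt (N * L)" using N assms by simp
    then have "N - u \<le> - L" using True unfolding u_def by linarith
    then show ?thesis using that[of 1] by simp
  next
    case False
    define s where "s = sqrt (L / N)"
    have "N * s\<^sup>2 = L" and "s * sqrt (N * L) = L"
      using False assms by (auto simp: s_def real_sqrt_mult[symmetric] field_simps power2_eq_square)
    moreover have "s * u = 2 * (s * sqrt (N * L)) + 2 * (s * L)"
      by (simp add: u_def algebra_simps)
    moreover have "0 \<le> s" "s \<le> 1" using False assms by (auto simp: s_def)
    moreover have "0 \<le> s * L" using \<open>0 \<le> s\<close> assms by simp
    ultimately show ?thesis by (intro that[of s]) linarith+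
  qed
  have "measure_pmf.prob (Pi_pmf I False (\<lambda>_. bernoulli_pmf p))
          {Y. u \<le> \<bar>count_true I Y - N\<bar>} \<le> 2 * exp (N * s\<^sup>2 - s * u)"
    unfolding N_def by (rule prob_count_true_deviation_le[OF assms(1-3) s(1,2)])
  also have "\<dots> \<le> 2 * exp (- L)" using s(3) by simp
  finally show ?thesis unfolding N_def u_def .
qed

lemma abs_diff_le_sqrt_swap:
  fixes p q e :: real
  assumes "0 \<le> p" "0 \<le> q" "0 \<le> e" "\<bar>q - p\<bar> \<le> 2 * sqrt (p * e) + 2 * e"
  shows "\<bar>q - p\<bar> \<le> 2 * sqrt (q * e) + 8 * e"
proof (cases "p \<le> q")
  case True
  have "sqrt (p * e) \<le> sqrt (q * e)"
    using True assms by (intro real_sqrt_le_mono mult_right_mono) auto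
  then show ?thesis using assms by linarith
next
  case False
  define x y s where "x = sqrt p" and "y = sqrt q" and "s = sqrt e"
  have nonneg: "0 \<le> y" "0 \<le> s" using assms by (simp_all add: y_def s_def)
  have sq: "x\<^sup>2 = p" "y\<^sup>2 = q" "s\<^sup>2 = e" using assms by (simp_all add: x_def y_def s_def)
  have "sqrt (p * e) = x * s" "sqrt (q * e) = y * s" by (simp_all add: x_def y_def s_def real_sqrt_mult)
  then have pq: "p - q \<le> 2 * x * s + 2 * e" using assms False by simp
  have "(x - s)\<^sup>2 \<le> (y + 2 * s)\<^sup>2"
  proof -
    have "(x - s)\<^sup>2 = p - 2 * x * s + e" using sq by (simp add: power2_diff)
    also have "\<dots> \<le> q + 3 * e" using pq by simp
    also have "\<dots> \<le> q + 4 * (y * s) + 4 * e" using nonneg assms(3) by simp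
    also have "\<dots> = (y + 2 * s)\<^sup>2" using sq by (simp add: power2_sum algebra_simps)
    finally show ?thesis .
  qed
  then have "x \<le> y + 3 * s" using power2_le_imp_le[of "x - s" "y + 2 * s"] nonneg by simp
  then have "2 * x * s \<le> 2 * (y + 3 * s) * s" using nonneg by (intro mult_right_mono) auto
  then show ?thesis
    using pq False sq \<open>sqrt (q * e) = y * s\<close> by (simp add: power2_eq_square algebra_simps)
qed

lemma abs_hb_diff_le_of_abs_diff_le:
  fixes p q e N :: real
  assumes "0 \<le> p" "p \<le> 1" "0 \<le> q" "q \<le> 1" "0 < e" "e \<le> 3/400" "- ln e \<le> ln N"
    and "\<bar>q - p\<bar> \<le> 2 * sqrt (q * e) + 8 * e"
  shows "\<bar>hb q - hb p\<bar> \<le> (if q = 0 then 0 else sqrt (12 * q * e) * - ln (q * e)) + 18 * e * ln N"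
proof -
  define A B where "A = 2 * sqrt (q * e)" and "B = 8 * e"
  have qe: "q * e \<le> e" using assms by (simp add: mult_left_le_one_le)
  then have "sqrt (q * e) \<le> sqrt (1/100)" using assms by (intro real_sqrt_le_mono) linarith
  then have "A + B \<le> 1" using assms by (simp add: A_def B_def real_sqrt_divide)
  then have "\<bar>hb q - hb p\<bar> \<le> (A - A * ln A) + (B - B * ln B)"
    using assms by (intro abs_hb_diff_le_split) (simp_all add: A_def B_def)
  moreover have "A - A * ln A \<le> (if q = 0 then 0 else sqrt (12 * q * e) * - ln (q * e))"
    using two_sqrt_minus_mult_ln_le[of "q * e"] qe assms
    by (cases "q = 0") (simp_all add: A_def B_def mult.assoc)
  moreover have "B - B * ln B \<le> 18 * e * ln N"
  proof -
    have "0 \<le> - ln e" using assms by simp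
    then have "8 * e * - ln e \<le> 18 * e * ln N"
      using assms by (intro mult_mono) auto
    then show ?thesis using eight_minus_mult_ln_le[OF assms(5)] by (simp add: A_def B_def)
  qed
  ultimately show ?thesis by linarith
qed

lemma sample_size_bounds:
  fixes \<delta> :: real
  assumes "0 < \<delta>" "\<delta> \<le> 1/2" "200 * ln (4 / \<delta>) \<le> real n"
  shows "1 \<le> ln (6 / \<delta>)" "0 < n" "ln (6 / \<delta>) / real n \<le> 3/400"
    and "- ln (ln (6 / \<delta>) / real n) \<le> ln (real n)"
proof -
  have "exp 1 \<le> (3 :: real)" using exp_bound[of 1] by simp
  also have "3 \<le> 4 / \<delta>" using assms by (simp add: field_simps)
  finally have l4: "1 \<le> ln (4 / \<delta>)" using ln_ge_iff[of "4 / \<delta>" 1] assms by simp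
  have "ln (6 / \<delta>) = ln (4 / \<delta>) + ln (3/2)"
    using assms ln_mult[of "4 / \<delta>" "3/2"] by simp
  moreover have "0 \<le> ln (3/2 :: real)" "ln (3/2 :: real) \<le> 1/2"
    using ln_le_minus_one[of "3/2 :: real"] by simp_all
  ultimately have L: "1 \<le> ln (6 / \<delta>)" "ln (6 / \<delta>) \<le> 3/2 * ln (4 / \<delta>)" using l4 by linarith+
  then show "1 \<le> ln (6 / \<delta>)" by simp
  have "ln (6 / \<delta>) / real n \<le> (3/2 * ln (4 / \<delta>)) / (200 * ln (4 / \<delta>))"
    using L l4 assms by (intro frac_le) auto
  then show "ln (6 / \<delta>) / real n \<le> 3/400" using l4 by simp
  have "0 < real n" using l4 assms by linarith
  then show "0 < n" by simp
  from \<open>0 < real n\<close> show "- ln (ln (6 / \<delta>) / real n) \<le> ln (real n)" using L by (simp add: ln_div)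
qed

lemma abs_hb_diff_le_UCD_ber:
  fixes p q \<delta> :: real
  assumes "0 \<le> p" "p \<le> 1" "0 \<le> q" "q \<le> 1"
    and "0 < \<delta>" "\<delta> \<le> 1/2" "200 * ln (4 / \<delta>) \<le> real n"
    and "\<bar>q - p\<bar> \<le> 2 * sqrt (p * (ln (6 / \<delta>) / real n)) + 2 * (ln (6 / \<delta>) / real n)"
  shows "\<bar>hb q - hb p\<bar> \<le> UCD_ber q \<delta> n"
proof -
  define e where "e = ln (6 / \<delta>) / real n"
  note bounds = sample_size_bounds[OF assms(5-7), folded e_def]
  have "0 < e" using bounds by (simp add: e_def)
  have "\<bar>q - p\<bar> \<le> 2 * sqrt (q * e) + 8 * e"
    using assms \<open>0 < e\<close> by (intro abs_diff_le_sqrt_swap) (simp_all add: e_def)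
  then have "\<bar>hb q - hb p\<bar>
      \<le> (if q = 0 then 0 else sqrt (12 * q * e) * - ln (q * e)) + 18 * e * ln (real n)"
    using assms bounds \<open>0 < e\<close> by (intro abs_hb_diff_le_of_abs_diff_le) simp_all
  also have "\<dots> = UCD_ber q \<delta> n"
  proof -
    have "ln (real n / (q * ln (6 / \<delta>))) = - ln (q * e)"
      using ln_inverse[of "q * e"] by (simp add: e_def)
    then show ?thesis by (simp add: UCD_ber_def e_def mult.assoc)
  qed
  finally show ?thesis .
qed

lemma abs_phat_diff_le:
  fixes p L :: real
  assumes "0 < n" "0 \<le> p" "0 \<le> L"
    and "\<bar>count_true {1..n} Y - real n * p\<bar> \<le> 2 * sqrt (real n * p * L) + 2 * L"
  shows "\<bar>phat n Y - p\<bar> \<le> 2 * sqrt (p * (L / real n)) + 2 * (L / real n)"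
proof -
  have "sqrt (real n * p * L) = real n * sqrt (p * (L / real n))"
  proof -
    have "real n * p * L = (real n)\<^sup>2 * (p * (L / real n))"
      using assms by (simp add: power2_eq_square field_simps)
    then show ?thesis by (simp only: real_sqrt_mult real_sqrt_abs abs_of_nat)
  qed
  moreover have "phat n Y - p = (count_true {1..n} Y - real n * p) / real n"
    using assms by (simp add: phat_eq_count_true field_simps)
  ultimately show ?thesis
    using assms by (simp add: divide_le_eq algebra_simps)
qed

lemma abs_hb_phat_diff_le_UCD_ber:
  fixes p \<delta> :: real
  assumes "0 \<le> p" "p \<le> 1" "0 < \<delta>" "\<delta> \<le> 1/2" "200 * ln (4 / \<delta>) \<le> real n"
    and "\<bar>count_true {1..n} Y - real n * p\<bar> \<le> 2 * sqrt (real n * p * ln (6 / \<delta>)) + 2 * ln (6 / \<delta>)"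
  shows "\<bar>hb (phat n Y) - hb p\<bar> \<le> UCD_ber (phat n Y) \<delta> n"
proof (rule abs_hb_diff_le_UCD_ber)
  have "1 \<le> ln (6 / \<delta>)" "0 < n" using sample_size_bounds(1,2)[OF assms(3-5)] by simp_all
  then show "\<bar>phat n Y - p\<bar> \<le> 2 * sqrt (p * (ln (6 / \<delta>) / real n)) + 2 * (ln (6 / \<delta>) / real n)"
    using assms by (intro abs_phat_diff_le) simp_all
  show "0 \<le> phat n Y" "phat n Y \<le> 1"
    using count_true_bounds[of "{1..n}" Y] \<open>0 < n\<close> by (simp_all add: phat_eq_count_true)
qed (use assms in simp_all)

theorem proposition2:
  fixes p \<delta> :: real and n :: nat
  assumes "0 \<le> p" "p \<le> 1 / 2"
    and "0 < \<delta>" "\<delta> \<le> 1 / 2"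
    and "real n \<ge> 200 * ln (4 / \<delta>)"
  shows "measure_pmf.prob (Pi_pmf {1..n} False (\<lambda>_. bernoulli_pmf p))
           {Y. \<bar>hb (phat n Y) - hb p\<bar> \<le> UCD_ber (phat n Y) \<delta> n} > 1 - \<delta>"
proof -
  define M where "M = Pi_pmf {1..n} False (\<lambda>_. bernoulli_pmf p)"
  define L where "L = ln (6 / \<delta>)"
  define Good where "Good = {Y. \<bar>hb (phat n Y) - hb p\<bar> \<le> UCD_ber (phat n Y) \<delta> n}"
  define Far where
    "Far = {Y. 2 * sqrt (real n * p * L) + 2 * L \<le> \<bar>count_true {1..n} Y - real n * p\<bar>}"
  have "- Good \<subseteq> Far"
  proof
    fix Y assume "Y \<in> - Good"
    then have "\<not> \<bar>count_true {1..n} Y - real n * p\<bar> \<le> 2 * sqrt (real n * p * L) + 2 * L"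
      using abs_hb_phat_diff_le_UCD_ber[of p \<delta> n Y] assms by (auto simp: Good_def L_def)
    then show "Y \<in> Far" by (simp add: Far_def)
  qed
  then have "measure_pmf.prob M (- Good) \<le> measure_pmf.prob M Far"
    by (intro measure_pmf.finite_measure_mono) auto
  also have "\<dots> \<le> 2 * exp (- L)"
    using prob_count_true_deviation_le_exp[of "{1..n}" p L] sample_size_bounds(1)[OF assms(3-5)] assms
    by (simp add: M_def Far_def L_def)
  also have "\<dots> = \<delta> / 3" using assms by (simp add: L_def exp_minus)
  finally show ?thesis
    using measure_pmf.prob_compl[of Good M] assms by (simp add: M_def Good_def Compl_eq_Diff_UNIV)
qed

end
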